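(* Let $\mathcal{A}$ be a finite alphabet and $\mathbf{p}$ an irreducible pair on $\mathcal{A}$. (1) If $\mathbf{q}$ is in the labeled extended Rauzy class of $\mathbf{p}$, then the quadratic forms $\mathcal{Q}_{\mathbf{p}}$ and $\mathcal{Q}_{\mathbf{q}}$ are equivalent. (2) If $\mathbf{q}=(q_0,q_1)$ is a pair on an alphabet $\mathcal{A}'$ such that the permutation $q_1\circ q_0^{-1}$ lies in the non-labeled extended Rauzy class of $\mathbf{p}$, then $\mathcal{Q}_{\mathbf{p}}$ and $\mathcal{Q}_{\mathbf{q}}$ are equivalent.
   Context: Let $n=\#\mathcal{A}$. A pair is $\mathbf{p}=(p_0,p_1)$ with $p_0,p_1:\mathcal{A}\to\{1,\dots,n\}$ bijections. Irreducible: $p_0^{-1}\{1,\dots,k\}\ne p_1^{-1}\{1,\dots,k\}$ for $1\le k<n$. Rauzy move of type $\varepsilon$: $\varepsilon\mathbf{p}=(p'_0,p'_1)$, $p'_\varepsilon=p_\varepsilon$, and for $z=p_\varepsilon^{-1}(n)$, $p'_{1-\varepsilon}(b)=p_{1-\varepsilon}(b)$ if $p_{1-\varepsilon}(b)\le p_{1-\varepsilon}(z)$, $=p_{1-\varepsilon}(b)+1$ if $p_{1-\varepsilon}(z)<p_{1-\varepsilon}(b)<n$, $=p_{1-\varepsilon}(z)+1$ if $p_{1-\varepsilon}(b)=n$. Left Rauzy move of type $\varepsilon$: $\tilde\varepsilon\mathbf{p}=(p'_0,p'_1)$, $p'_\varepsilon=p_\varepsilon$, and for $a=p_\varepsilon^{-1}(1)$,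 $p'_{1-\varepsilon}(b)=p_{1-\varepsilon}(a)-1$ if $p_{1-\varepsilon}(b)=1$, $=p_{1-\varepsilon}(b)-1$ if $1<p_{1-\varepsilon}(b)<p_{1-\varepsilon}(a)$, unchanged otherwise. The labeled extended Rauzy class of $\mathbf{p}$ is the set of pairs reachable from $\mathbf{p}$ by Rauzy and left Rauzy moves of both types; the non-labeled extended Rauzy class is its image under $(p_0,p_1)\mapsto p_1\circ p_0^{-1}\in\mathfrak{S}_n$. The canonical quadratic form of $\mathbf{p}$ is $\mathcal{Q}_{\mathbf{p}}:\mathbb{Z}_2^{\mathcal{A}}\to\mathbb{Z}_2$, $\mathcal{Q}_{\mathbf{p}}(v)=\sum_{a\in\mathcal{A}}v_a^2+\sum_{\{a,b\}}L_{\mathbf{p}}(a,b)v_av_b \pmod 2$, the second sum over unordered pairs of distinct letters, where $L_{\mathbf{p}}(a,b)=1$ if $(p_0(a)-p_0(b))(p_1(a)-p_1(b))<0$ and $0$ otherwise. Quadratic forms $\mathcal{Q}:\mathbb{Z}_2^{\mathcal{A}}\to\mathbb{Z}_2$ and $\mathcal{Q}':\mathbb{Z}_2^{\mathcal{A}'}\to\mathbb{Z}_2$ are equivalent if there is an invertible linear map $A:\mathbb{Z}_2^{\mathcal{A}}\to\mathbb{Z}_2^{\mathcal{A}'}$ with $\mathcal{Q}'\circ A=\mathcal{Q}$. *)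

theory Defs
  imports Main "HOL-Library.Z2" "HOL-Library.Cardinality"
begin

text \<open>A pair on the finite alphabet 'a (a finite type), n = CARD('a).
  A pair is represented as (p0, p1); the boolean eps encodes the type:
  False = 0, True = 1.\<close>

type_synonym 'a pair = "('a \<Rightarrow> nat) \<times> ('a \<Rightarrow> nat)"

definition is_pair :: "('a::finite) pair \<Rightarrow> bool" where
  "is_pair p \<longleftrightarrow> bij_betw (fst p) UNIV {1..CARD('a)} \<and> bij_betw (snd p) UNIV {1..CARD('a)}"

definition irreducible_pair :: "('a::finite) pair \<Rightarrow> bool" where
  "irreducible_pair p \<longleftrightarrow>
     (\<forall>k. 1 \<le> k \<and> k < CARD('a) \<longrightarrow>
        (fst p) -` {1..k} \<noteq> (snd p) -` {1..k})"

definition row :: "'a pair \<Rightarrow> bool \<Rightarrow> ('a \<Rightarrow> nat)" where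
  "row p e = (if e then snd p else fst p)"

definition mk_pair :: "bool \<Rightarrow> ('a \<Rightarrow> nat) \<Rightarrow> ('a \<Rightarrow> nat) \<Rightarrow> 'a pair" where
  "mk_pair e pe po = (if e then (po, pe) else (pe, po))"

definition rauzy_move :: "bool \<Rightarrow> ('a::finite) pair \<Rightarrow> 'a pair" where
  "rauzy_move e p =
    (let n = CARD('a); pe = row p e; po = row p (\<not> e);
         z = inv_into UNIV pe n;
         po' = (\<lambda>b. if po b \<le> po z then po b
                    else if po z < po b \<and> po b < n then po b + 1
                    else po z + 1)
     in mk_pair e pe po')"

definition left_rauzy_move :: "bool \<Rightarrow> ('a::finite) pair \<Rightarrow> 'a pair" where
  "left_rauzy_move e p =
    (let pe = row p e; po = row p (\<not> e);
         a = inv_into UNIV pe 1;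
         po' = (\<lambda>b. if po b = 1 then po a - 1
                    else if 1 < po b \<and> po b < po a then po b - 1
                    else po b)
     in mk_pair e pe po')"

definition rauzy_step :: "('a::finite) pair \<Rightarrow> 'a pair \<Rightarrow> bool" where
  "rauzy_step p q \<longleftrightarrow> (\<exists>e. q = rauzy_move e p \<or> q = left_rauzy_move e p)"

definition ext_rauzy_class :: "('a::finite) pair \<Rightarrow> 'a pair set" where
  "ext_rauzy_class p = {q. rauzy_step\<^sup>*\<^sup>* p q}"

text \<open>The permutation q1 o q0^{-1} of {1..n}, represented as the list of its
  values at 1, ..., n (so permutations of different degrees are distinct).\<close>
definition perm_of :: "('a::finite) pair \<Rightarrow> nat list" where
  "perm_of p = map (\<lambda>i. snd p (inv_into UNIV (fst p) i)) [1..<CARD('a) + 1]"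

definition nonlabeled_ext_rauzy_class :: "('a::finite) pair \<Rightarrow> nat list set" where
  "nonlabeled_ext_rauzy_class p = perm_of ` ext_rauzy_class p"

definition L_pair :: "'a pair \<Rightarrow> 'a \<Rightarrow> 'a \<Rightarrow> bool" where
  "L_pair p a b \<longleftrightarrow>
     (int (fst p a) - int (fst p b)) * (int (snd p a) - int (snd p b)) < 0"

text \<open>The sum over unordered pairs
  {a,b} of distinct letters is taken over ordered pairs (a,b) with p0 a < p0 b,
  which lists each unordered pair exactly once since p0 is injective.\<close>
definition Qform :: "('a::finite) pair \<Rightarrow> ('a \<Rightarrow> bit) \<Rightarrow> bit" where
  "Qform p v = (\<Sum>a\<in>UNIV. v a ^ 2) +
     (\<Sum>(a, b)\<in>{(a, b). a \<noteq> b \<and> fst p a < fst p b}.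
         (if L_pair p a b then 1 else 0) * v a * v b)"

definition z2_linear :: "(('a \<Rightarrow> bit) \<Rightarrow> ('b \<Rightarrow> bit)) \<Rightarrow> bool" where
  "z2_linear A \<longleftrightarrow>
     (\<forall>u v. A (\<lambda>x. u x + v x) = (\<lambda>y. A u y + A v y)) \<and>
     (\<forall>c u. A (\<lambda>x. c * u x) = (\<lambda>y. c * A u y))"

definition qf_equiv :: "(('a \<Rightarrow> bit) \<Rightarrow> bit) \<Rightarrow> (('b \<Rightarrow> bit) \<Rightarrow> bit) \<Rightarrow> bool" where
  "qf_equiv Q Q' \<longleftrightarrow> (\<exists>A. z2_linear A \<and> bij A \<and> Q' \<circ> A = Q)"

end

theory Submission
  imports Defs
begin

(*
  A (right) Rauzy move of type e
  with winner z (last letter of row e) and loser w (last letter of the other row), z /= w, moves w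
  to just behind z in its row. The crossing matrix then changes only in the row and column of w:
  L_q(w,b) = L_p(w,b) + L_p(z,b) for b /= z. Since L_p(z,w) = 1, this is exactly the effect of the
  transvection v |-> v + v_w e_z, i.e. Q_q(v) = Q_p(v + v_w e_z). Left moves are the mirror image,
  with first instead of last letters. Part (2) follows from part (1), because two pairs with the
  same permutation differ by a relabelling of the alphabet, which transports the canonical forms.
*)

lemma bit_add_self [simp]: "x + x = (0::bit)"
  by (cases x) simp_all

lemma bit_mult_self [simp]: "x * x = (x::bit)"
  by (cases x) simp_all

lemma bit_power2 [simp]: "x ^ 2 = (x::bit)"
  by (cases x) simp_all

declare add_bit_eq_xor [simp del] mult_bit_eq_and [simp del] power_bit_unfold [simp del]

section \<open>Sums over unordered pairs\<close>

definition ascending_pairs :: "('a \<Rightarrow> nat) \<Rightarrow> ('a \<times> 'a) set" where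
  "ascending_pairs f = {(a, b). a \<noteq> b \<and> f a < f b}"

lemma sum_ascending_pairs_swap:
  fixes f :: "'a::finite \<Rightarrow> nat" and g :: "'a \<Rightarrow> 'a \<Rightarrow> 'c::comm_monoid_add"
  assumes "inj f"
  shows "(\<Sum>(a, b)\<in>ascending_pairs f. g a b + g b a) = (\<Sum>(a, b)\<in>{(a, b). a \<noteq> b}. g a b)"
proof -
  let ?swap = "\<lambda>(a::'a, b::'a). (b, a)"
  have "f a < f b \<or> f b < f a" if "a \<noteq> b" for a b
    using assms that by (metis injD nat_neq_iff)
  then have partition: "{(a, b). a \<noteq> b} = ascending_pairs f \<union> ?swap ` ascending_pairs f"
    by (fastforce simp: ascending_pairs_def image_iff)
  have disjoint: "ascending_pairs f \<inter> ?swap ` ascending_pairs f = {}"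
    by (auto simp: ascending_pairs_def)
  have "inj_on ?swap (ascending_pairs f)"
    by (auto simp: inj_on_def)
  then have "(\<Sum>(a, b)\<in>?swap ` ascending_pairs f. g a b) = (\<Sum>(a, b)\<in>ascending_pairs f. g b a)"
    by (subst sum.reindex) (simp_all add: case_prod_beta comp_def)
  moreover have "(\<Sum>(a, b)\<in>{(a, b). a \<noteq> b}. g a b)
      = (\<Sum>(a, b)\<in>ascending_pairs f. g a b) + (\<Sum>(a, b)\<in>?swap ` ascending_pairs f. g a b)"
    unfolding partition by (rule sum.union_disjoint) (auto simp: disjoint)
  ultimately show ?thesis
    by (simp add: sum.distrib split_def)
qed

lemma sum_ascending_pairs_reorder:
  fixes f g :: "'a::finite \<Rightarrow> nat" and c :: "'a \<Rightarrow> 'a \<Rightarrow> 'c::comm_monoid_add"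
  assumes "inj f" "inj g" "\<And>a b. c a b = c b a"
  shows "(\<Sum>(a, b)\<in>ascending_pairs f. c a b) = (\<Sum>(a, b)\<in>ascending_pairs g. c a b)"
proof -
  let ?sort = "\<lambda>h (a::'a, b::'a). if h a < h b then (a, b) else (b, a)"
  have sorted: "?sort h x \<in> ascending_pairs h"
    if inj: "inj h" and mem: "x \<in> ascending_pairs k" for h k :: "'a \<Rightarrow> nat" and x
  proof -
    obtain a b where x: "x = (a, b)" "a \<noteq> b"
      using mem by (auto simp: ascending_pairs_def)
    then have "h a \<noteq> h b"
      using inj by (auto dest: injD)
    then show ?thesis
      using x by (auto simp: ascending_pairs_def)
  qed
  show ?thesis
  proof (rule sum.reindex_bij_witness[where i = "?sort f" and j = "?sort g"])
    show "?sort g x \<in> ascending_pairs g" if "x \<in> ascending_pairs f" for x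
      using sorted[OF assms(2) that] .
    show "?sort f x \<in> ascending_pairs f" if "x \<in> ascending_pairs g" for x
      using sorted[OF assms(1) that] .
    show "?sort f (?sort g x) = x" if "x \<in> ascending_pairs f" for x
      using that by (cases x) (simp add: ascending_pairs_def)
    show "?sort g (?sort f x) = x" if "x \<in> ascending_pairs g" for x
      using that by (cases x) (simp add: ascending_pairs_def)
    show "(case ?sort g x of (a, b) \<Rightarrow> c a b) = (case x of (a, b) \<Rightarrow> c a b)" for x
      by (cases x) (simp add: assms(3))
  qed
qed

lemma sum_off_diagonal_delta:
  fixes k :: "'a::finite \<Rightarrow> 'c::comm_monoid_add"
  shows "(\<Sum>(a, b)\<in>{(a, b). a \<noteq> b}. if a = c then k b else 0) = (\<Sum>b\<in>UNIV - {c}. k b)"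
proof -
  have off_diagonal: "{(a, b). a \<noteq> b} = Sigma UNIV (\<lambda>a. UNIV - {a})"
    by auto
  have "(\<Sum>(a, b)\<in>{(a, b). a \<noteq> b}. if a = c then k b else 0)
      = (\<Sum>a\<in>UNIV. \<Sum>b\<in>UNIV - {a}. if a = c then k b else 0)"
    unfolding off_diagonal by (rule sum.Sigma[symmetric]) auto
  also have "\<dots> = (\<Sum>a\<in>UNIV. if a = c then (\<Sum>b\<in>UNIV - {a}. k b) else 0)"
    by (rule sum.cong) auto
  finally show ?thesis
    by (simp add: sum.delta)
qed

section \<open>The canonical form under transvections\<close>

definition crossing :: "'a pair \<Rightarrow> 'a \<Rightarrow> 'a \<Rightarrow> bit" where
  "crossing p a b = (if L_pair p a b then 1 else 0)"

lemma L_pair_commute: "L_pair p a b = L_pair p b a"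
proof -
  have "(int (fst p a) - int (fst p b)) * (int (snd p a) - int (snd p b))
      = (int (fst p b) - int (fst p a)) * (int (snd p b) - int (snd p a))"
    by algebra
  then show ?thesis
    unfolding L_pair_def by simp
qed

lemma crossing_commute: "crossing p a b = crossing p b a"
  unfolding crossing_def using L_pair_commute by metis

lemma Qform_eq:
  "Qform p v = (\<Sum>a\<in>UNIV. v a) + (\<Sum>(a, b)\<in>ascending_pairs (fst p). crossing p a b * v a * v b)"
  unfolding Qform_def ascending_pairs_def crossing_def by simp

lemma Qform_update_add:
  fixes p :: "('a::finite) pair"
  assumes "inj (fst p)"
  shows "Qform p (v(z := v z + x))
    = Qform p v + x + x * (\<Sum>b\<in>UNIV - {z}. crossing p z b * v b)"
proof -
  define u where "u = v(z := v z + x)"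
  let ?g = "\<lambda>a b. if a = z then x * (crossing p z b * v b) else 0"
  have "(\<Sum>(a, b)\<in>ascending_pairs (fst p). crossing p a b * u a * u b)
      = (\<Sum>(a, b)\<in>ascending_pairs (fst p). crossing p a b * v a * v b + (?g a b + ?g b a))"
  proof (intro sum.cong refl, clarify)
    fix a b
    assume "(a, b) \<in> ascending_pairs (fst p)"
    then have "a \<noteq> b"
      by (simp add: ascending_pairs_def)
    then show "crossing p a b * u a * u b = crossing p a b * v a * v b + (?g a b + ?g b a)"
      by (cases "a = z"; cases "b = z") (simp_all add: u_def crossing_commute[of p a z] algebra_simps)
  qed
  also have "\<dots> = (\<Sum>(a, b)\<in>ascending_pairs (fst p). crossing p a b * v a * v b)
      + (\<Sum>(a, b)\<in>{(a, b). a \<noteq> b}. ?g a b)"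
    using sum_ascending_pairs_swap[OF assms, of ?g] by (simp add: sum.distrib split_def)
  also have "(\<Sum>(a, b)\<in>{(a, b). a \<noteq> b}. ?g a b) = x * (\<Sum>b\<in>UNIV - {z}. crossing p z b * v b)"
    by (simp add: sum_off_diagonal_delta sum_distrib_left)
  moreover have "(\<Sum>a\<in>UNIV. u a) = (\<Sum>a\<in>UNIV. v a) + x"
  proof -
    have "u = (\<lambda>a. v a + (if a = z then x else 0))"
      by (auto simp: u_def)
    then show ?thesis
      by (simp add: sum.distrib)
  qed
  ultimately show ?thesis
    unfolding u_def[symmetric] Qform_eq by (simp add: ac_simps)
qed

lemma Qform_crossing_change:
  fixes p q :: "('a::finite) pair"
  assumes "inj (fst p)" "inj (fst q)"
    and change: "\<And>a b. a \<noteq> b \<Longrightarrow> crossing q a b = crossing p a b + d a b + d b a"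
  shows "Qform q v = Qform p v + (\<Sum>(a, b)\<in>{(a, b). a \<noteq> b}. d a b * v a * v b)"
proof -
  have "(\<Sum>(a, b)\<in>ascending_pairs (fst q). crossing q a b * v a * v b)
      = (\<Sum>(a, b)\<in>ascending_pairs (fst p). crossing q a b * v a * v b)"
    by (rule sum_ascending_pairs_reorder[OF assms(2,1)])
      (metis crossing_commute mult.commute mult.left_commute)
  also have "\<dots> = (\<Sum>(a, b)\<in>ascending_pairs (fst p). crossing p a b * v a * v b
      + (d a b * v a * v b + d b a * v b * v a))"
    by (intro sum.cong) (auto simp: ascending_pairs_def change algebra_simps)
  also have "\<dots> = (\<Sum>(a, b)\<in>ascending_pairs (fst p). crossing p a b * v a * v b)
      + (\<Sum>(a, b)\<in>{(a, b). a \<noteq> b}. d a b * v a * v b)"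
    using sum_ascending_pairs_swap[OF assms(1), of "\<lambda>a b. d a b * v a * v b"]
    by (simp add: sum.distrib split_def)
  finally show ?thesis
    unfolding Qform_eq by (simp add: ac_simps)
qed

definition transvection :: "'a \<Rightarrow> 'a \<Rightarrow> ('a \<Rightarrow> bit) \<Rightarrow> ('a \<Rightarrow> bit)" where
  "transvection z w v = v(z := v z + v w)"

lemma Qform_transvection:
  fixes p q :: "('a::finite) pair"
  assumes "inj (fst p)" "inj (fst q)" and "z \<noteq> w" and "crossing p z w = 1"
    and "\<And>a b. a \<noteq> b \<Longrightarrow> crossing q a b = crossing p a b
      + (if a = w \<and> b \<noteq> z then crossing p z b else 0) + (if b = w \<and> a \<noteq> z then crossing p z a else 0)"
  shows "Qform q v = Qform p (transvection z w v)"
proof -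
  let ?S = "\<Sum>b\<in>UNIV - {z, w}. crossing p z b * v b"
  have "Qform q v = Qform p v
      + (\<Sum>(a, b)\<in>{(a, b). a \<noteq> b}. (if a = w \<and> b \<noteq> z then crossing p z b else 0) * v a * v b)"
    using assms(1,2,5) by (rule Qform_crossing_change)
  also have "(\<Sum>(a, b)\<in>{(a, b). a \<noteq> b}. (if a = w \<and> b \<noteq> z then crossing p z b else 0) * v a * v b)
      = (\<Sum>b\<in>UNIV - {w}. if b \<noteq> z then v w * (crossing p z b * v b) else 0)"
    unfolding sum_off_diagonal_delta[symmetric] by (intro sum.cong) (auto simp: mult_ac)
  also have "\<dots> = (\<Sum>b\<in>UNIV - {z, w}. v w * (crossing p z b * v b))"
    by (rule sum.mono_neutral_cong_right) auto
  also have "\<dots> = v w * ?S"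
    by (simp add: sum_distrib_left)
  also have "Qform p v + v w * ?S = Qform p (transvection z w v)"
  proof -
    have "(\<Sum>b\<in>UNIV - {z}. crossing p z b * v b) = v w + ?S"
      using assms(3,4) by (simp add: sum.remove[of _ w] insert_commute Diff_insert[symmetric])
    then show ?thesis
      using Qform_update_add[OF assms(1), of v z "v w"] by (simp add: transvection_def algebra_simps)
  qed
  finally show ?thesis .
qed

lemma qf_equiv_refl: "qf_equiv Q Q"
  unfolding qf_equiv_def z2_linear_def by (rule exI[of _ id]) auto

lemma qf_equiv_trans:
  assumes "qf_equiv Q1 Q2" "qf_equiv Q2 Q3"
  shows "qf_equiv Q1 Q3"
proof -
  obtain A where A: "z2_linear A" "bij A" "Q2 \<circ> A = Q1"
    using assms(1) unfolding qf_equiv_def by blast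
  obtain B where B: "z2_linear B" "bij B" "Q3 \<circ> B = Q2"
    using assms(2) unfolding qf_equiv_def by blast
  have "z2_linear (B \<circ> A)"
    using A(1) B(1) unfolding z2_linear_def by simp
  moreover have "bij (B \<circ> A)"
    using A(2) B(2) by (rule bij_comp)
  moreover have "Q3 \<circ> (B \<circ> A) = Q1"
    using A(3) B(3) by (simp add: o_assoc)
  ultimately show ?thesis
    unfolding qf_equiv_def by blast
qed

lemma z2_linear_transvection: "z2_linear (transvection z w)"
  unfolding z2_linear_def transvection_def by (auto simp: fun_eq_iff algebra_simps)

lemma transvection_involutive: "z \<noteq> w \<Longrightarrow> transvection z w (transvection z w v) = v"
  unfolding transvection_def by (auto simp: fun_eq_iff add.assoc)

lemma qf_equiv_transvection:
  fixes p q :: "('a::finite) pair"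
  assumes "inj (fst p)" "inj (fst q)" and "z \<noteq> w" and "crossing p z w = 1"
    and "\<And>a b. a \<noteq> b \<Longrightarrow> crossing q a b = crossing p a b
      + (if a = w \<and> b \<noteq> z then crossing p z b else 0) + (if b = w \<and> a \<noteq> z then crossing p z a else 0)"
  shows "qf_equiv (Qform p) (Qform q)"
  unfolding qf_equiv_def
proof (intro exI conjI)
  show "z2_linear (transvection z w)"
    by (rule z2_linear_transvection)
  show "bij (transvection z w)"
    by (rule o_bij[of "transvection z w"]) (simp_all add: fun_eq_iff transvection_involutive[OF assms(3)])
  show "Qform q \<circ> transvection z w = Qform p"
  proof
    fix v
    have "Qform q (transvection z w v) = Qform p (transvection z w (transvection z w v))"
      by (rule Qform_transvection[OF assms])
    then show "(Qform q \<circ> transvection z w) v = Qform p v"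
      by (simp add: transvection_involutive[OF assms(3)])
  qed
qed

section \<open>Rauzy moves\<close>

lemma L_pair_mk_pair: "L_pair (mk_pair e pe po) = L_pair (pe, po)"
  unfolding L_pair_def mk_pair_def by (cases e) (auto simp: fun_eq_iff mult.commute)

lemma mk_pair_rows: "mk_pair e (row p e) (row p (\<not> e)) = p"
  unfolding mk_pair_def row_def by (cases e) auto

lemma L_pair_iff_order:
  assumes "inj (fst p)" "inj (snd p)" "a \<noteq> b"
  shows "L_pair p a b \<longleftrightarrow> (fst p a < fst p b) \<noteq> (snd p a < snd p b)"
proof -
  have "fst p a \<noteq> fst p b" "snd p a \<noteq> snd p b"
    using assms by (auto dest: injD)
  then show ?thesis
    unfolding L_pair_def mult_less_0_iff by auto
qed

text \<open>The hypotheses say that \<open>z\<close> and \<open>w\<close> sit at the same end (both last or both first) of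
  the rows \<open>pe\<close> and \<open>po\<close> (\<open>ends\<close>), and that \<open>po'\<close> moves \<open>w\<close> to the neighbour of \<open>z\<close> on that
  side, leaving the other letters in order. This is what both kinds of Rauzy moves do.\<close>
lemma crossing_relocate:
  fixes pe po po' :: "'a \<Rightarrow> nat"
  assumes inj: "inj pe" "inj po" "inj po'" and "z \<noteq> w"
    and keep: "\<And>a b. a \<noteq> w \<Longrightarrow> b \<noteq> w \<Longrightarrow> po' a < po' b \<longleftrightarrow> po a < po b"
    and beside: "\<And>b. b \<noteq> w \<Longrightarrow> b \<noteq> z \<Longrightarrow> po' w < po' b \<longleftrightarrow> po z < po b"
    and swap: "po' w < po' z \<longleftrightarrow> po w < po z"
    and ends: "\<And>b. b \<noteq> w \<Longrightarrow> b \<noteq> z \<Longrightarrow> pe z < pe b \<longleftrightarrow> po w < po b"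
    and "a \<noteq> b"
  shows "crossing (pe, po') a b = crossing (pe, po) a b
    + (if a = w \<and> b \<noteq> z then crossing (pe, po) z b else 0)
    + (if b = w \<and> a \<noteq> z then crossing (pe, po) z a else 0)"
proof -
  have L: "L_pair (pe, f) x y \<longleftrightarrow> (pe x < pe y) \<noteq> (f x < f y)" if "inj f" "x \<noteq> y" for f x y
    using L_pair_iff_order[of "(pe, f)"] inj(1) that by simp
  have flip: "f x < f y \<longleftrightarrow> \<not> f y < f x" if "inj f" "x \<noteq> y" for f :: "'a \<Rightarrow> nat" and x y
  proof -
    have "f x \<noteq> f y"
      using that by (auto dest: injD)
    then show ?thesis
      by auto
  qed
  show ?thesis
    using \<open>a \<noteq> b\<close> \<open>z \<noteq> w\<close>
    by (cases "a = w"; cases "b = w"; cases "a = z"; cases "b = z")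
      (simp_all add: crossing_def L inj keep beside swap ends
        flip[OF inj(2), of a w] flip[OF inj(3), of a w] flip[OF inj(2), of z w] flip[OF inj(3), of z w])
qed

lemma qf_equiv_relocate:
  fixes pe po po' :: "('a::finite) \<Rightarrow> nat"
  assumes inj: "inj pe" "inj po" "inj po'" and "z \<noteq> w"
    and "\<And>a b. a \<noteq> w \<Longrightarrow> b \<noteq> w \<Longrightarrow> po' a < po' b \<longleftrightarrow> po a < po b"
    and "\<And>b. b \<noteq> w \<Longrightarrow> b \<noteq> z \<Longrightarrow> po' w < po' b \<longleftrightarrow> po z < po b"
    and "po' w < po' z \<longleftrightarrow> po w < po z"
    and "\<And>b. b \<noteq> w \<Longrightarrow> b \<noteq> z \<Longrightarrow> pe z < pe b \<longleftrightarrow> po w < po b"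
    and zw: "L_pair (pe, po) z w"
  shows "qf_equiv (Qform (mk_pair e pe po)) (Qform (mk_pair e pe po'))"
proof (rule qf_equiv_transvection)
  have crossing_mk_pair: "crossing (mk_pair e pe f) = crossing (pe, f)" for f
    by (intro ext) (simp add: crossing_def L_pair_mk_pair)
  have "inj (fst (mk_pair e pe f))" if "inj f" for f
    using inj(1) that by (cases e) (simp_all add: mk_pair_def)
  then show "inj (fst (mk_pair e pe po))" "inj (fst (mk_pair e pe po'))"
    using inj by blast+
  show "z \<noteq> w"
    by fact
  show "crossing (mk_pair e pe po) z w = 1"
    using zw by (simp add: crossing_mk_pair crossing_def)
  show "crossing (mk_pair e pe po') a b = crossing (mk_pair e pe po) a b
      + (if a = w \<and> b \<noteq> z then crossing (mk_pair e pe po) z b else 0)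
      + (if b = w \<and> a \<noteq> z then crossing (mk_pair e pe po) z a else 0)" if "a \<noteq> b" for a b
    unfolding crossing_mk_pair using assms(1-8) that by (rule crossing_relocate)
qed

lemma right_move_relocates:
  fixes pe po :: "'a \<Rightarrow> nat"
  assumes inj: "inj pe" "inj po"
    and range: "\<And>x. pe x \<in> {1..n}" "\<And>x. po x \<in> {1..n}"
    and z: "pe z = n" and w: "po w = n" and "z \<noteq> w"
    and po': "po' = (\<lambda>b. if po b \<le> po z then po b
    else if po z < po b \<and> po b < n then po b + 1 else po z + 1)"
  shows "inj po'" "\<And>x. po' x \<in> {1..n}"
    "\<And>a b. a \<noteq> w \<Longrightarrow> b \<noteq> w \<Longrightarrow> po' a < po' b \<longleftrightarrow> po a < po b"
    "\<And>b. b \<noteq> w \<Longrightarrow> b \<noteq> z \<Longrightarrow> po' w < po' b \<longleftrightarrow> po z < po b"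
    "po' w < po' z \<longleftrightarrow> po w < po z"
    "\<And>b. b \<noteq> w \<Longrightarrow> b \<noteq> z \<Longrightarrow> pe z < pe b \<longleftrightarrow> po w < po b"
    "L_pair (pe, po) z w"
proof -
  have pe_below: "pe x < n" if "x \<noteq> z" for x
    using that range(1)[of x] inj(1) z by (metis atLeastAtMost_iff injD le_neq_implies_less)
  have po_below: "po y < n" if "y \<noteq> w" for y
    using that range(2)[of y] inj(2) w by (metis atLeastAtMost_iff injD le_neq_implies_less)
  have po_top: "y = w" if "\<not> po y < n" for y
    using po_below that by blast
  show "inj po'"
  proof (rule injI)
    fix x y
    assume "po' x = po' y"
    then have "po x = po y"
      using po_top po_below[OF \<open>z \<noteq> w\<close>] w by (auto simp: po' split: if_splits)
    then show "x = y"
      using inj(2) by (simp add: inj_eq)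
  qed
  show "po' x \<in> {1..n}" for x
    using range(2)[of x] po_below[OF \<open>z \<noteq> w\<close>] by (auto simp: po')
  show "po' a < po' b \<longleftrightarrow> po a < po b" if "a \<noteq> w" "b \<noteq> w" for a b
    using po_below[OF that(1)] po_below[OF that(2)] by (auto simp: po')
  show "po' w < po' b \<longleftrightarrow> po z < po b" if "b \<noteq> w" "b \<noteq> z" for b
    using po_below[OF that(1)] w by (auto simp: po')
  show "po' w < po' z \<longleftrightarrow> po w < po z"
    using po_below[OF \<open>z \<noteq> w\<close>] w by (auto simp: po')
  show "pe z < pe b \<longleftrightarrow> po w < po b" if "b \<noteq> w" "b \<noteq> z" for b
    using range[of b] z w by auto
  show "L_pair (pe, po) z w"
    using pe_below po_below \<open>z \<noteq> w\<close> z w by (simp add: L_pair_def mult_less_0_iff)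
qed

lemma left_move_relocates:
  fixes pe po :: "'a \<Rightarrow> nat"
  assumes inj: "inj pe" "inj po"
    and range: "\<And>x. pe x \<in> {1..n}" "\<And>x. po x \<in> {1..n}"
    and z: "pe z = 1" and w: "po w = 1" and "z \<noteq> w"
    and po': "po' = (\<lambda>b. if po b = 1 then po z - 1
    else if 1 < po b \<and> po b < po z then po b - 1 else po b)"
  shows "inj po'" "\<And>x. po' x \<in> {1..n}"
    "\<And>a b. a \<noteq> w \<Longrightarrow> b \<noteq> w \<Longrightarrow> po' a < po' b \<longleftrightarrow> po a < po b"
    "\<And>b. b \<noteq> w \<Longrightarrow> b \<noteq> z \<Longrightarrow> po' w < po' b \<longleftrightarrow> po z < po b"
    "po' w < po' z \<longleftrightarrow> po w < po z"
    "\<And>b. b \<noteq> w \<Longrightarrow> b \<noteq> z \<Longrightarrow> pe z < pe b \<longleftrightarrow> po w < po b"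
    "L_pair (pe, po) z w"
proof -
  have pe_above: "1 < pe x" if "x \<noteq> z" for x
    using that range(1)[of x] inj(1) z by (metis atLeastAtMost_iff injD le_neq_implies_less)
  have po_above: "1 < po y" if "y \<noteq> w" for y
    using that range(2)[of y] inj(2) w by (metis atLeastAtMost_iff injD le_neq_implies_less)
  have po_bottom: "y = w" if "\<not> 1 < po y" for y
    using po_above that by blast
  show "inj po'"
  proof (rule injI)
    fix x y
    assume "po' x = po' y"
    then have "po x = po y"
      using po_bottom po_above[OF \<open>z \<noteq> w\<close>] w by (auto simp: po' split: if_splits)
    then show "x = y"
      using inj(2) by (simp add: inj_eq)
  qed
  show "po' x \<in> {1..n}" for x
    using range(2)[of x] range(2)[of z] po_above[OF \<open>z \<noteq> w\<close>] by (auto simp: po')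
  show "po' a < po' b \<longleftrightarrow> po a < po b" if "a \<noteq> w" "b \<noteq> w" for a b
    using po_above[OF that(1)] po_above[OF that(2)] by (auto simp: po')
  show "po' w < po' b \<longleftrightarrow> po z < po b" if "b \<noteq> w" "b \<noteq> z" for b
  proof -
    have "po b \<noteq> po z"
      using inj(2) that(2) by (auto dest: injD)
    then show ?thesis
      using po_above[OF that(1)] po_above[OF \<open>z \<noteq> w\<close>] w by (auto simp: po')
  qed
  show "po' w < po' z \<longleftrightarrow> po w < po z"
    using po_above[OF \<open>z \<noteq> w\<close>] w by (auto simp: po')
  show "pe z < pe b \<longleftrightarrow> po w < po b" if "b \<noteq> w" "b \<noteq> z" for b
    using pe_above[OF that(2)] po_above[OF that(1)] z w by auto
  show "L_pair (pe, po) z w"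
    using pe_above po_above \<open>z \<noteq> w\<close> z w by (simp add: L_pair_def mult_less_0_iff)
qed

lemma bij_betw_interval_if_inj:
  fixes f :: "'a::finite \<Rightarrow> nat"
  assumes "inj f" "\<And>x. f x \<in> {1..CARD('a)}"
  shows "bij_betw f UNIV {1..CARD('a)}"
proof -
  have "range f \<subseteq> {1..CARD('a)}" "card (range f) = card {1..CARD('a)}"
    using assms by (auto simp: card_image)
  then have "range f = {1..CARD('a)}"
    by (intro card_subset_eq) auto
  then show ?thesis
    using assms(1) by (simp add: bij_betw_def)
qed

text \<open>Irreducibility enters only through its case \<open>k = 1\<close>: the first letters of the two rows
  differ. This is exactly what keeps the left Rauzy moves well defined (for a common first
  letter they would produce position 0), and it is preserved by all moves.\<close>
definition rauzy_admissible :: "('a::finite) pair \<Rightarrow> bool" where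
  "rauzy_admissible p \<longleftrightarrow> is_pair p \<and> (\<forall>x. fst p x = 1 \<longrightarrow> snd p x \<noteq> 1)"

lemma rauzy_admissible_mk_pair:
  "rauzy_admissible (mk_pair e pe po :: ('a::finite) pair) \<longleftrightarrow>
    bij_betw pe UNIV {1..CARD('a)} \<and> bij_betw po UNIV {1..CARD('a)} \<and> (\<forall>x. pe x = 1 \<longrightarrow> po x \<noteq> 1)"
  unfolding rauzy_admissible_def is_pair_def mk_pair_def by (cases e) auto

lemma rauzy_move_step:
  fixes p :: "('a::finite) pair"
  assumes "rauzy_admissible p"
  shows "rauzy_admissible (rauzy_move e p) \<and> qf_equiv (Qform p) (Qform (rauzy_move e p))"
proof -
  define n pe po where "n = CARD('a)" and "pe = row p e" and "po = row p (\<not> e)"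
  define z w where "z = inv_into UNIV pe n" and "w = inv_into UNIV po n"
  define po' where "po' = (\<lambda>b. if po b \<le> po z then po b
    else if po z < po b \<and> po b < n then po b + 1 else po z + 1)"
  have p: "p = mk_pair e pe po"
    by (simp add: pe_def po_def mk_pair_rows)
  have q: "rauzy_move e p = mk_pair e pe po'"
    unfolding rauzy_move_def Let_def n_def pe_def po_def z_def po'_def by simp
  have bij: "bij_betw pe UNIV {1..n}" "bij_betw po UNIV {1..n}" and first: "\<forall>x. pe x = 1 \<longrightarrow> po x \<noteq> 1"
    using assms unfolding p rauzy_admissible_mk_pair n_def by blast+
  have inj: "inj pe" "inj po" and range: "\<And>x. pe x \<in> {1..n}" "\<And>x. po x \<in> {1..n}"
    using bij by (auto simp: bij_betw_def)
  have "n \<in> {1..n}"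
    by (simp add: n_def Suc_le_eq)
  then have z: "pe z = n" and w: "po w = n"
    using bij by (simp_all add: z_def w_def bij_betw_inv_into_right)
  show ?thesis
  proof (cases "z = w")
    case True
    then have "po' = po"
      using range(2) w by (auto simp: po'_def fun_eq_iff)
    then show ?thesis
      using assms by (simp add: q flip: p) (rule qf_equiv_refl)
  next
    case False
    note relocate = right_move_relocates[OF inj range z w False po'_def]
    have "bij_betw po' UNIV {1..n}"
      using relocate(1,2) unfolding n_def by (rule bij_betw_interval_if_inj)
    moreover have "\<forall>x. pe x = 1 \<longrightarrow> po' x \<noteq> 1"
      using first range(2)[of z] by (auto simp: po'_def)
    moreover have "qf_equiv (Qform p) (Qform (mk_pair e pe po'))"
      unfolding p by (rule qf_equiv_relocate[OF inj relocate(1) False relocate(3-7)])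
    ultimately show ?thesis
      using bij(1) by (simp add: q rauzy_admissible_mk_pair n_def)
  qed
qed

lemma left_rauzy_move_step:
  fixes p :: "('a::finite) pair"
  assumes "rauzy_admissible p"
  shows "rauzy_admissible (left_rauzy_move e p) \<and> qf_equiv (Qform p) (Qform (left_rauzy_move e p))"
proof -
  define n pe po where "n = CARD('a)" and "pe = row p e" and "po = row p (\<not> e)"
  define z w where "z = inv_into UNIV pe 1" and "w = inv_into UNIV po 1"
  define po' where "po' = (\<lambda>b. if po b = 1 then po z - 1
    else if 1 < po b \<and> po b < po z then po b - 1 else po b)"
  have p: "p = mk_pair e pe po"
    by (simp add: pe_def po_def mk_pair_rows)
  have q: "left_rauzy_move e p = mk_pair e pe po'"
    unfolding left_rauzy_move_def Let_def pe_def po_def z_def po'_def by simp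
  have bij: "bij_betw pe UNIV {1..n}" "bij_betw po UNIV {1..n}" and first: "\<forall>x. pe x = 1 \<longrightarrow> po x \<noteq> 1"
    using assms unfolding p rauzy_admissible_mk_pair n_def by blast+
  have inj: "inj pe" "inj po" and range: "\<And>x. pe x \<in> {1..n}" "\<And>x. po x \<in> {1..n}"
    using bij by (auto simp: bij_betw_def)
  have "1 \<in> {1..n}"
    by (simp add: n_def Suc_le_eq)
  then have z: "pe z = 1" and w: "po w = 1"
    using bij by (simp_all add: z_def w_def bij_betw_inv_into_right)
  then have "z \<noteq> w"
    using first by auto
  note relocate = left_move_relocates[OF inj range z w this po'_def]
  have "bij_betw po' UNIV {1..n}"
    using relocate(1,2) unfolding n_def by (rule bij_betw_interval_if_inj)
  moreover have "\<forall>x. pe x = 1 \<longrightarrow> po' x \<noteq> 1"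
  proof -
    have "x = z" if "pe x = 1" for x
      using injD[OF inj(1), of x z] z that by simp
    moreover have "po' z \<noteq> 1"
      using first z by (simp add: po'_def)
    ultimately show ?thesis
      by blast
  qed
  moreover have "qf_equiv (Qform p) (Qform (mk_pair e pe po'))"
    unfolding p by (rule qf_equiv_relocate[OF inj relocate(1) \<open>z \<noteq> w\<close> relocate(3-7)])
  ultimately show ?thesis
    using bij(1) by (simp add: q rauzy_admissible_mk_pair n_def)
qed

lemma ext_rauzy_class_qf_equiv:
  assumes "rauzy_admissible p" and "q \<in> ext_rauzy_class p"
  shows "rauzy_admissible q \<and> qf_equiv (Qform p) (Qform q)"
proof -
  have "rauzy_step\<^sup>*\<^sup>* p q"
    using assms(2) by (simp add: ext_rauzy_class_def)
  then show ?thesis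
  proof (induction rule: rtranclp_induct)
    case base
    show ?case
      using assms(1) qf_equiv_refl by blast
  next
    case (step q r)
    then show ?case
      unfolding rauzy_step_def using rauzy_move_step left_rauzy_move_step qf_equiv_trans by blast
  qed
qed

lemma rauzy_admissible_if_irreducible:
  fixes p :: "('a::finite) pair"
  assumes "is_pair p" "irreducible_pair p" "CARD('a) \<noteq> 1"
  shows "rauzy_admissible p"
  unfolding rauzy_admissible_def
proof (intro conjI allI impI notI)
  show "is_pair p"
    by fact
  fix x
  assume "fst p x = 1" "snd p x = 1"
  moreover have "inj (fst p)" "inj (snd p)"
    using assms(1) by (auto simp: is_pair_def bij_betw_def)
  ultimately have "fst p -` {1..1} = {x}" "snd p -` {1..1} = {x}"
    by (auto, metis injD)+
  moreover have "1 < CARD('a)"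
    using assms(3) by (simp add: Suc_lessI)
  then have "fst p -` {1..1} \<noteq> snd p -` {1..1}"
    using assms(2) unfolding irreducible_pair_def by blast
  ultimately show False
    by simp
qed

section \<open>Relabelling the alphabet\<close>

lemma Qform_relabel:
  fixes q :: "('a::finite) pair" and \<sigma> :: "'b::finite \<Rightarrow> 'a"
  assumes "bij \<sigma>"
  shows "Qform (fst q \<circ> \<sigma>, snd q \<circ> \<sigma>) (u \<circ> \<sigma>) = Qform q u"
proof -
  have \<sigma>: "\<sigma> (inv \<sigma> a) = a" "inv \<sigma> (\<sigma> b) = b" for a b
    using assms by (simp_all add: bij_is_surj surj_f_inv_f bij_is_inj)
  have inv_eq: "inv \<sigma> a = inv \<sigma> b \<longleftrightarrow> a = b" for a b
    by (metis \<sigma>(1))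
  have "(\<Sum>b\<in>UNIV. u (\<sigma> b) ^ 2) = (\<Sum>a\<in>UNIV. u a ^ 2)"
    by (rule sum.reindex_bij_witness[where i = "inv \<sigma>" and j = \<sigma>]) (simp_all add: \<sigma>)
  moreover have "(\<Sum>(a, b)\<in>{(a, b). a \<noteq> b \<and> fst q (\<sigma> a) < fst q (\<sigma> b)}.
        (if L_pair (fst q \<circ> \<sigma>, snd q \<circ> \<sigma>) a b then 1 else 0) * u (\<sigma> a) * u (\<sigma> b))
      = (\<Sum>(a, b)\<in>{(a, b). a \<noteq> b \<and> fst q a < fst q b}.
        (if L_pair q a b then 1 else 0) * u a * u b)"
    by (rule sum.reindex_bij_witness[where i = "map_prod (inv \<sigma>) (inv \<sigma>)" and j = "map_prod \<sigma> \<sigma>"])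
      (auto simp: \<sigma> inv_eq L_pair_def)
  ultimately show ?thesis
    by (simp add: Qform_def)
qed

lemma qf_equiv_relabel:
  fixes q :: "('a::finite) pair" and \<sigma> :: "'b::finite \<Rightarrow> 'a"
  assumes "bij \<sigma>"
  shows "qf_equiv (Qform q) (Qform (fst q \<circ> \<sigma>, snd q \<circ> \<sigma>))"
  unfolding qf_equiv_def
proof (intro exI conjI)
  show "z2_linear (\<lambda>u::'a \<Rightarrow> bit. u \<circ> \<sigma>)"
    by (simp add: z2_linear_def comp_def)
  show "bij (\<lambda>u::'a \<Rightarrow> bit. u \<circ> \<sigma>)"
    using assms by (intro o_bij[where g = "\<lambda>v. v \<circ> inv \<sigma>"])
      (auto simp: fun_eq_iff bij_is_inj bij_is_surj surj_f_inv_f)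
  show "Qform (fst q \<circ> \<sigma>, snd q \<circ> \<sigma>) \<circ> (\<lambda>u. u \<circ> \<sigma>) = Qform q"
    using Qform_relabel[OF assms] by (simp add: fun_eq_iff)
qed

lemma length_perm_of [simp]: "length (perm_of (p :: ('a::finite) pair)) = CARD('a)"
  by (simp add: perm_of_def)

lemma nth_perm_of:
  "i < CARD('a) \<Longrightarrow> perm_of (p :: ('a::finite) pair) ! i = snd p (inv_into UNIV (fst p) (Suc i))"
  by (simp add: perm_of_def del: upt_Suc)

lemma perm_of_eq_relabelling:
  fixes q :: "('b::finite) pair" and q' :: "('a::finite) pair"
  assumes "is_pair q" "is_pair q'" and perm: "perm_of q = perm_of q'"
  obtains \<sigma> where "bij \<sigma>" "q = (fst q' \<circ> \<sigma>, snd q' \<circ> \<sigma>)"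
proof
  define n where "n = CARD('a)"
  have "CARD('b) = n"
    using arg_cong[OF perm, of length] by (simp add: n_def)
  then have bij: "bij_betw (fst q) UNIV {1..n}" "bij_betw (fst q') UNIV {1..n}"
    using assms(1,2) by (simp_all add: is_pair_def n_def)
  define \<sigma> where "\<sigma> = inv_into UNIV (fst q') \<circ> fst q"
  show "bij \<sigma>"
    unfolding \<sigma>_def using bij(1) bij_betw_inv_into[OF bij(2)] by (rule bij_betw_trans)
  have fst: "fst q' (\<sigma> b) = fst q b" for b
  proof -
    have "fst q b \<in> range (fst q')"
      using bij by (auto simp: bij_betw_def)
    then show ?thesis
      by (simp add: \<sigma>_def f_inv_into_f)
  qed
  have "snd q' (\<sigma> b) = snd q b" for b
  proof -
    have "fst q b \<in> {1..n}"
      using bij(1) by (auto simp: bij_betw_def)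
    then obtain i where i: "fst q b = Suc i" "i < n"
      by (cases "fst q b") auto
    have "inv_into UNIV (fst q) (fst q b) = b"
      using bij(1) by (simp add: bij_betw_def)
    then show ?thesis
      using nth_perm_of[of i q] nth_perm_of[of i q'] perm i \<open>CARD('b) = n\<close>
      by (simp add: \<sigma>_def n_def)
  qed
  with fst show "q = (fst q' \<circ> \<sigma>, snd q' \<circ> \<sigma>)"
    by (simp add: fun_eq_iff prod_eq_iff)
qed

lemma Qform_card_1:
  fixes p :: "('a::finite) pair"
  assumes "CARD('a) = 1"
  shows "Qform p v = (\<Sum>a\<in>UNIV. v a)"
proof -
  have "a = b" for a b :: 'a
    using assms card_le_Suc0_iff_eq[of "UNIV :: 'a set"] by auto
  then show ?thesis
    by (simp add: Qform_def)
qed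

lemma qf_equiv_card_1:
  fixes p :: "('a::finite) pair" and q :: "('b::finite) pair"
  assumes "CARD('a) = 1" "CARD('b) = 1"
  shows "qf_equiv (Qform p) (Qform q)"
proof -
  obtain \<sigma> :: "'b \<Rightarrow> 'a" where "bij \<sigma>"
    using assms bij_betw_iff_card[of "UNIV :: 'b set" "UNIV :: 'a set"] by auto
  moreover have "Qform q = Qform (fst p \<circ> \<sigma>, snd p \<circ> \<sigma>)"
    using Qform_card_1[OF assms(2)] by (auto simp: fun_eq_iff)
  ultimately show ?thesis
    using qf_equiv_relabel by metis
qed

theorem proposition2p17:
  fixes p :: "('a::finite) pair"
  assumes "is_pair p" and "irreducible_pair p"
  shows "(\<forall>q \<in> ext_rauzy_class p. qf_equiv (Qform p) (Qform q)) \<and>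
         (\<forall>q :: ('b::finite) pair. is_pair q \<and> perm_of q \<in> nonlabeled_ext_rauzy_class p
              \<longrightarrow> qf_equiv (Qform p) (Qform q))"
proof (cases "CARD('a) = 1")
  case True
  \<comment> \<open>the only letter is first in both rows, but every form on one letter is \<open>v \<mapsto> v a\<close>\<close>
  have "CARD('b) = 1" if "perm_of q \<in> nonlabeled_ext_rauzy_class p" for q :: "'b pair"
    using that True by (auto simp: nonlabeled_ext_rauzy_class_def dest: arg_cong[of _ _ length])
  then show ?thesis
    using qf_equiv_card_1[OF True True] qf_equiv_card_1[OF True] by blast
next
  case False
  then have labeled: "rauzy_admissible q \<and> qf_equiv (Qform p) (Qform q)"
    if "q \<in> ext_rauzy_class p" for q
    using that assms rauzy_admissible_if_irreducible ext_rauzy_class_qf_equiv by blast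
  show ?thesis
  proof (intro conjI ballI allI impI)
    show "qf_equiv (Qform p) (Qform q)" if "q \<in> ext_rauzy_class p" for q
      using labeled[OF that] by blast
    fix q :: "'b pair"
    assume "is_pair q \<and> perm_of q \<in> nonlabeled_ext_rauzy_class p"
    then obtain q' where "q' \<in> ext_rauzy_class p" "is_pair q" "perm_of q = perm_of q'"
      by (auto simp: nonlabeled_ext_rauzy_class_def)
    moreover obtain \<sigma> where "bij \<sigma>" "q = (fst q' \<circ> \<sigma>, snd q' \<circ> \<sigma>)"
      using perm_of_eq_relabelling calculation labeled unfolding rauzy_admissible_def by blast
    ultimately show "qf_equiv (Qform p) (Qform q)"
      using labeled qf_equiv_relabel qf_equiv_trans by metis
  qed
qed

end
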